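(* Let $n\ge 2$ and let $P=(P_1,\dots,P_t)$ be a partition of $\{1,\dots,n+1\}$. Let $\Delta_i$ be a simplex of dimension $|P_i|$ for $i=1,\dots,t$, so that $\Delta_1\times\dots\times\Delta_t$ is an $(n+1)$-dimensional convex polytope. Then ${\cal K}(P)$ is isomorphic to the boundary complex of the polar (dual) polytope of $\Delta_1\times\dots\times\Delta_t$.
   Context: For a partition $P=(P_1,\dots,P_t)$ of $\{1,\dots,n+1\}$, ${\cal K}(P)$ is the simplicial complex on the vertex set $\{1,\dots,n+1\}\cup\{p_1,\dots,p_t\}$ ($t$ new vertices) whose $n$-faces are the sets $\{y_1,\dots,y_{n+1}\}$ with, for each $i$, $y_i=i$ or $y_i=p_j$ where $i\in P_j$, subject to the $y_i$ being pairwise distinct; its faces are all nonempty subsets of these. The boundary complex of a simplicial polytope is the abstract simplicial complex whose faces are the vertex sets of its proper faces; isomorphism means a vertex bijection mapping faces exactly onto faces. *)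

theory Defs
  imports "HOL-Analysis.Analysis"
begin

text \<open>Partition P = (P_1,...,P_t) of {1..n+1}, given as a list (0-indexed blocks).\<close>
definition is_partition :: "nat \<Rightarrow> nat set list \<Rightarrow> bool" where
  "is_partition n P \<longleftrightarrow>
     (\<forall>j<length P. P!j \<noteq> {}) \<and>
     (\<forall>j<length P. \<forall>j'<length P. j \<noteq> j' \<longrightarrow> P!j \<inter> P!j' = {}) \<and>
     \<Union>(set P) = {1..n+1}"

text \<open>Vertices of K(P): Inl i for i in {1..n+1}, Inr j for the new vertex p_j.\<close>
definition K_vertices :: "nat \<Rightarrow> nat set list \<Rightarrow> (nat + nat) set" where
  "K_vertices n P = Inl ` {1..n+1} \<union> Inr ` {..<length P}"

definition K_facets :: "nat \<Rightarrow> nat set list \<Rightarrow> (nat + nat) set set" where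
  "K_facets n P = { y ` {1..n+1} | y.
      (\<forall>i\<in>{1..n+1}. y i = Inl i \<or> (\<exists>j<length P. i \<in> P!j \<and> y i = Inr j))
      \<and> inj_on y {1..n+1} }"

definition K_faces :: "nat \<Rightarrow> nat set list \<Rightarrow> (nat + nat) set set" where
  "K_faces n P = {\<sigma>. \<sigma> \<noteq> {} \<and> (\<exists>F\<in>K_facets n P. \<sigma> \<subseteq> F)}"

definition bd_vertices :: "'a::euclidean_space set \<Rightarrow> 'a set" where
  "bd_vertices Q = {v. v extreme_point_of Q}"

definition bd_faces :: "'a::euclidean_space set \<Rightarrow> 'a set set" where
  "bd_faces Q = {{v. v extreme_point_of Q \<and> v \<in> F} | F. F face_of Q \<and> F \<noteq> {} \<and> F \<noteq> Q}"

definition polar_dual :: "'a::real_inner set \<Rightarrow> 'a set" where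
  "polar_dual S = {y. \<forall>x\<in>S. inner x y \<le> 1}"

definition complex_iso ::
  "'a set \<Rightarrow> 'a set set \<Rightarrow> 'b set \<Rightarrow> 'b set set \<Rightarrow> bool" where
  "complex_iso V1 F1 V2 F2 \<longleftrightarrow>
     (\<exists>f. bij_betw f V1 V2 \<and> (\<lambda>\<sigma>. f ` \<sigma>) ` F1 = F2)"

definition block_proj :: "'d set \<Rightarrow> real^'d \<Rightarrow> real^'d" where
  "block_proj B x = (\<chi> k. if k \<in> B then x $ k else 0)"

end

theory Submission
  imports Defs
begin

text \<open>
  Write the product of simplices as the set of points \<open>x\<close> at which all the affine functions
  \<open>\<lambda>\<^sub>j\<^sub>,\<^sub>v x\<close> are nonnegative, where \<open>\<lambda>\<^sub>j\<^sub>,\<^sub>v\<close> is the barycentric coordinate, with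
  respect to the vertex \<open>v\<close> of \<open>\<Delta>\<^sub>j\<close>, of the projection of \<open>x\<close> onto the coordinates of
  block \<open>j\<close>. After moving the interior point \<open>c\<close> to the origin each inequality reads
  \<open>x \<bullet> u\<^sub>j\<^sub>,\<^sub>v \<le> 1\<close>, so the polar is the convex hull of the points \<open>u\<^sub>j\<^sub>,\<^sub>v\<close>, and its faces
  correspond to the sets of inequalities that are tight at a common point. The coordinates of
  a block sum to \<open>1\<close>, so a tight set never contains a whole block; conversely, a set that misses
  some vertex of every block is exactly the tight set at the point whose block projections
  are the barycenters of the missed vertices. Hence the boundary complex of the polar is the
  join of the boundaries of the simplices \<open>\<Delta>\<^sub>j\<close>, and so is \<open>K(P)\<close>, whose blocks
  \<open>P\<^sub>j \<union> {p\<^sub>j}\<close> have \<open>|P\<^sub>j| + 1\<close> elements each.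
\<close>

section \<open>Barycentric coordinates\<close>

definition bary_weights :: "'a::real_vector set \<Rightarrow> ('a \<Rightarrow> real) \<Rightarrow> 'a \<Rightarrow> bool" where
  "bary_weights C \<mu> z \<longleftrightarrow> (\<forall>v. v \<notin> C \<longrightarrow> \<mu> v = 0) \<and> sum \<mu> C = 1 \<and> (\<Sum>v\<in>C. \<mu> v *\<^sub>R v) = z"

definition bary_coord :: "'a::real_vector set \<Rightarrow> 'a \<Rightarrow> 'a \<Rightarrow> real" where
  "bary_coord C z = (THE \<mu>. bary_weights C \<mu> z)"

lemma bary_weights_unique:
  assumes "finite C" "\<not> affine_dependent C" "bary_weights C \<mu> z" "bary_weights C \<mu>' z"
  shows "\<mu> = \<mu>'"
proof -
  have "sum (\<lambda>v. \<mu> v - \<mu>' v) C = 0" "(\<Sum>v\<in>C. (\<mu> v - \<mu>' v) *\<^sub>R v) = 0"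
    using assms(3,4) by (simp_all add: bary_weights_def sum_subtractf scaleR_diff_left)
  then have "\<forall>v\<in>C. \<mu> v - \<mu>' v = 0"
    using assms(2) affine_dependent_explicit_finite[OF assms(1)] by blast
  then show ?thesis using assms(3,4) by (auto simp: bary_weights_def fun_eq_iff)
qed

lemma bary_coord_eqI:
  assumes "finite C" "\<not> affine_dependent C" "bary_weights C \<mu> z"
  shows "bary_coord C z = \<mu>"
  unfolding bary_coord_def using assms bary_weights_unique by blast

lemma bary_weights_bary_coord:
  assumes "finite C" "\<not> affine_dependent C" "z \<in> affine hull C"
  shows "bary_weights C (bary_coord C z) z"
proof -
  obtain u where "sum u C = 1" "(\<Sum>v\<in>C. u v *\<^sub>R v) = z"
    using assms(3) affine_hull_finite[OF assms(1)] by blast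
  then have "bary_weights C (\<lambda>v. if v \<in> C then u v else 0) z"
    by (simp add: bary_weights_def if_distrib cong: if_cong)
  with assms(1,2) show ?thesis by (simp add: bary_coord_eqI)
qed

lemma bary_coord_affine_combination:
  assumes "finite C" "\<not> affine_dependent C"
    and "x \<in> affine hull C" "y \<in> affine hull C" "w \<in> affine hull C"
  shows "bary_coord C (s *\<^sub>R x + t *\<^sub>R y + (1 - s - t) *\<^sub>R w)
       = (\<lambda>v. s * bary_coord C x v + t * bary_coord C y v + (1 - s - t) * bary_coord C w v)"
proof (rule bary_coord_eqI[OF assms(1,2)])
  note bw = bary_weights_bary_coord[OF assms(1,2)]
  show "bary_weights C (\<lambda>v. s * bary_coord C x v + t * bary_coord C y v + (1 - s - t) * bary_coord C w v)
      (s *\<^sub>R x + t *\<^sub>R y + (1 - s - t) *\<^sub>R w)"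
    using bw[OF assms(3)] bw[OF assms(4)] bw[OF assms(5)]
    by (simp add: bary_weights_def sum.distrib scaleR_add_left
        flip: sum_distrib_left scaleR_scaleR scaleR_sum_right)
qed

lemma convex_hull_iff_bary_coord_nonneg:
  assumes "finite C" "\<not> affine_dependent C" "z \<in> affine hull C"
  shows "z \<in> convex hull C \<longleftrightarrow> (\<forall>v\<in>C. bary_coord C z v \<ge> 0)"
proof
  assume "z \<in> convex hull C"
  then obtain u where u: "\<forall>x\<in>C. 0 \<le> u x" "sum u C = 1" "(\<Sum>v\<in>C. u v *\<^sub>R v) = z"
    using convex_hull_finite[OF assms(1)] by blast
  then have "bary_weights C (\<lambda>v. if v \<in> C then u v else 0) z"
    by (simp add: bary_weights_def if_distrib cong: if_cong)
  then show "\<forall>v\<in>C. bary_coord C z v \<ge> 0" using u(1) by (simp add: bary_coord_eqI[OF assms(1,2)])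
next
  assume "\<forall>v\<in>C. bary_coord C z v \<ge> 0"
  then show "z \<in> convex hull C"
    using bary_weights_bary_coord[OF assms] convex_hull_finite[OF assms(1)]
    unfolding bary_weights_def by blast
qed

lemma bary_coord_barycenter:
  assumes "finite C" "\<not> affine_dependent C" "T \<subseteq> C" "T \<noteq> {}"
  shows "bary_coord C (\<Sum>v\<in>T. (1 / card T) *\<^sub>R v) = (\<lambda>v. if v \<in> T then 1 / card T else 0)"
proof (rule bary_coord_eqI[OF assms(1,2)])
  have "(\<Sum>v\<in>C. if v \<in> T then 1 / card T else 0) = (\<Sum>v\<in>T. 1 / card T)"
    "(\<Sum>v\<in>C. (if v \<in> T then 1 / card T else 0) *\<^sub>R v) = (\<Sum>v\<in>T. (1 / card T) *\<^sub>R v)"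
    by (rule sum.mono_neutral_cong_right[OF assms(1,3)]; simp)+
  moreover have "finite T" using assms(1,3) finite_subset by blast
  ultimately show "bary_weights C (\<lambda>v. if v \<in> T then 1 / card T else 0) (\<Sum>v\<in>T. (1 / card T) *\<^sub>R v)"
    using assms(3,4) by (auto simp: bary_weights_def)
qed

lemma bary_coord_vertex:
  assumes "finite C" "\<not> affine_dependent C" "w \<in> C"
  shows "bary_coord C w v = (if v = w then 1 else 0)"
  using bary_coord_barycenter[OF assms(1,2), of "{w}"] assms(3) by auto

lemma linear_bary_coord_comp:
  assumes "finite C" "\<not> affine_dependent C" "linear \<pi>" "\<And>z. \<pi> z \<in> affine hull C"
  shows "linear (\<lambda>z. bary_coord C (\<pi> z) v - bary_coord C 0 v)"
proof -
  have "\<pi> 0 = 0" using assms(3) by (simp add: linear_0)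
  then have zero: "0 \<in> affine hull C" using assms(4)[of 0] by simp
  note comb = bary_coord_affine_combination[OF assms(1,2) assms(4) assms(4) zero]
  show ?thesis
  proof (rule linearI)
    fix x y
    have "\<pi> (x + y) = 1 *\<^sub>R \<pi> x + 1 *\<^sub>R \<pi> y + (1 - 1 - 1) *\<^sub>R 0"
      by (simp add: linear_add[OF assms(3)])
    then show "bary_coord C (\<pi> (x + y)) v - bary_coord C 0 v
        = (bary_coord C (\<pi> x) v - bary_coord C 0 v) + (bary_coord C (\<pi> y) v - bary_coord C 0 v)"
      using comb[of 1 x 1 y] by simp
  next
    fix a x
    have "\<pi> (a *\<^sub>R x) = a *\<^sub>R \<pi> x + 0 *\<^sub>R \<pi> x + (1 - a - 0) *\<^sub>R 0"
      by (simp add: linear_scale[OF assms(3)])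
    then show "bary_coord C (\<pi> (a *\<^sub>R x)) v - bary_coord C 0 v
        = a *\<^sub>R (bary_coord C (\<pi> x) v - bary_coord C 0 v)"
      using comb[of a x 0 x] by (simp add: algebra_simps)
  qed
qed

section \<open>Polars of polytopes given by inequalities\<close>

lemma convex_polar_dual: "convex (polar_dual S)"
  unfolding polar_dual_def convex_def
proof clarsimp
  fix x y z and s t :: real
  assume "\<forall>x\<in>S. inner x y \<le> 1" "\<forall>x\<in>S. inner x z \<le> 1" "0 \<le> s" "0 \<le> t" "s + t = 1" "x \<in> S"
  then have "s * inner x y + t * inner x z \<le> s * 1 + t * 1"
    by (intro add_mono mult_left_mono) auto
  with \<open>s + t = 1\<close> show "inner x (s *\<^sub>R y + t *\<^sub>R z) \<le> 1" by (simp add: inner_add_right)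
qed

lemma polar_dual_supporting_face:
  assumes "x \<in> S"
  shows "(polar_dual S \<inter> {y. inner x y = 1}) face_of polar_dual S"
  using assms by (intro face_of_Int_supporting_hyperplane_le convex_polar_dual) (auto simp: polar_dual_def)

lemma face_of_convex_hull_eq:
  fixes U :: "'a::euclidean_space set"
  assumes "compact U" "F face_of convex hull U"
  shows "F = convex hull (U \<inter> F)"
proof
  obtain U' where "U' \<subseteq> U" "F = convex hull U'"
    using face_of_convex_hull_subset[OF assms] .
  then have "U' \<subseteq> U \<inter> F" by (auto intro: hull_inc)
  with \<open>F = convex hull U'\<close> show "F \<subseteq> convex hull (U \<inter> F)" by (simp add: hull_mono)
  show "convex hull (U \<inter> F) \<subseteq> F"
    using face_of_imp_convex[OF assms(2)] by (intro hull_minimal) auto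
qed

text \<open>For nonempty finite \<open>U\<close> this says that \<open>0\<close> lies in the relative interior of the convex hull of \<open>U\<close>.\<close>
definition no_proper_halfspace :: "'a::real_inner set \<Rightarrow> bool" where
  "no_proper_halfspace U \<longleftrightarrow> (\<forall>w. (\<forall>y\<in>U. inner w y \<le> 0) \<longrightarrow> (\<forall>y\<in>U. inner w y = 0))"

lemma zero_in_convex_hull_if_no_proper_halfspace:
  fixes U :: "'a::euclidean_space set"
  assumes "finite U" "U \<noteq> {}" "no_proper_halfspace U"
  shows "0 \<in> convex hull U"
proof (rule ccontr)
  assume "0 \<notin> convex hull U"
  then obtain a b where ab: "inner a 0 < b" "\<forall>y\<in>convex hull U. b < inner a y"
    using separating_hyperplane_closed_point[OF convex_convex_hull] assms(1)
    by (metis compact_imp_closed finite_imp_compact_convex_hull)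
  then have pos: "inner a y > 0" if "y \<in> U" for y
    using that hull_inc[of y U] by fastforce
  then have "\<forall>y\<in>U. inner (- a) y = 0"
    using assms(3) unfolding no_proper_halfspace_def by (metis inner_minus_left neg_le_0_iff_le less_imp_le)
  with pos assms(2) show False by fastforce
qed

lemma polar_dual_halfspaces_eq_convex_hull:
  fixes U :: "'a::euclidean_space set"
  assumes "finite U" "0 \<in> convex hull U"
  shows "polar_dual {x. \<forall>y\<in>U. inner x y \<le> 1} = convex hull U" (is "polar_dual ?Q = _")
proof
  show "convex hull U \<subseteq> polar_dual ?Q"
  proof (rule hull_minimal)
    show "U \<subseteq> polar_dual ?Q" by (auto simp: polar_dual_def)
  qed (rule convex_polar_dual)
  show "polar_dual ?Q \<subseteq> convex hull U"
  proof
    fix z assume z: "z \<in> polar_dual ?Q"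
    show "z \<in> convex hull U"
    proof (rule ccontr)
      assume "z \<notin> convex hull U"
      then obtain a b where ab: "inner a z < b" "\<forall>y\<in>convex hull U. b < inner a y"
        using separating_hyperplane_closed_point[OF convex_convex_hull] assms(1)
        by (metis compact_imp_closed finite_imp_compact_convex_hull)
      have "b < 0" using ab(2) assms(2) by fastforce
      define x where "x = (1 / b) *\<^sub>R a"
      have "x \<in> ?Q"
        using ab(2) \<open>b < 0\<close> hull_inc[of _ U] by (fastforce simp: x_def divide_le_eq)
      moreover have "inner x z > 1"
        using ab(1) \<open>b < 0\<close> by (simp add: x_def less_divide_eq)
      ultimately show False using z by (force simp: polar_dual_def)
    qed
  qed
qed

lemma proper_face_exposed_by_polar:
  fixes U :: "'a::euclidean_space set"
  assumes "finite U" "no_proper_halfspace U" "0 \<in> convex hull U"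
    and F: "F face_of convex hull U" "F \<noteq> convex hull U"
  obtains x where "\<forall>y\<in>U. inner x y \<le> 1" "F = convex hull U \<inter> {y. inner x y = 1}"
proof -
  have "polyhedron (convex hull U)"
    using assms(1) by (intro polytope_imp_polyhedron) (auto simp: polytope_def)
  then have "F exposed_face_of convex hull U" using F(1) exposed_face_of_polyhedron by blast
  then obtain a b where ab: "convex hull U \<subseteq> {y. inner a y \<le> b}" "F = convex hull U \<inter> {y. inner a y = b}"
    unfolding exposed_face_of_def by blast
  have "b \<noteq> 0"
  proof
    assume "b = 0"
    then have "\<forall>y\<in>U. inner a y = 0"
      using assms(2) ab(1) hull_inc[of _ U] unfolding no_proper_halfspace_def by blast
    then have "convex hull U \<subseteq> {y. inner a y = 0}"
      by (intro hull_minimal convex_hyperplane) auto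
    with ab(2) \<open>b = 0\<close> F(2) show False by blast
  qed
  moreover have "b \<ge> 0" using ab(1) assms(3) by fastforce
  ultimately have "b > 0" by simp
  show thesis
  proof
    show "\<forall>y\<in>U. inner ((1 / b) *\<^sub>R a) y \<le> 1"
      using ab(1) hull_inc[of _ U] \<open>b > 0\<close> by (fastforce simp: divide_le_eq)
    show "F = convex hull U \<inter> {y. inner ((1 / b) *\<^sub>R a) y = 1}"
      using ab(2) \<open>b > 0\<close> by (auto simp: field_simps)
  qed
qed

lemma polar_dual_supporting_face_eq:
  fixes U :: "'a::euclidean_space set"
  assumes "finite U" "polar_dual Q = convex hull U" "x \<in> Q"
  shows "polar_dual Q \<inter> {y. inner x y = 1} = convex hull (U \<inter> {y. inner x y = 1})"
proof -
  have "polar_dual Q \<inter> {y. inner x y = 1} face_of convex hull U"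
    using polar_dual_supporting_face[OF assms(3)] assms(2) by simp
  then have "polar_dual Q \<inter> {y. inner x y = 1} = convex hull (U \<inter> (polar_dual Q \<inter> {y. inner x y = 1}))"
    using face_of_convex_hull_eq finite_imp_compact assms(1) by blast
  moreover have "U \<inter> (polar_dual Q \<inter> {y. inner x y = 1}) = U \<inter> {y. inner x y = 1}"
    using assms(2) hull_subset[of U convex] by blast
  ultimately show ?thesis by simp
qed

lemma bd_vertices_polar_dual:
  fixes U :: "'a::euclidean_space set"
  assumes "finite U" "polar_dual Q = convex hull U"
    and vertex: "\<And>y. y \<in> U \<Longrightarrow> \<exists>x\<in>Q. U \<inter> {y'. inner x y' = 1} = {y}"
  shows "bd_vertices (polar_dual Q) = U"
proof
  show "bd_vertices (polar_dual Q) \<subseteq> U"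
    using assms(2) extreme_point_of_convex_hull by (auto simp: bd_vertices_def)
  show "U \<subseteq> bd_vertices (polar_dual Q)"
  proof
    fix y assume "y \<in> U"
    then obtain x where "x \<in> Q" "U \<inter> {y'. inner x y' = 1} = {y}" using vertex by blast
    then have "{y} face_of polar_dual Q"
      using polar_dual_supporting_face_eq[OF assms(1,2)] polar_dual_supporting_face
      by (metis convex_hull_singleton)
    then show "y \<in> bd_vertices (polar_dual Q)" by (simp add: bd_vertices_def face_of_singleton)
  qed
qed

lemma bd_faces_polar_dual:
  fixes U :: "'a::euclidean_space set"
  assumes "finite U" "no_proper_halfspace U" "0 \<in> convex hull U"
    and Q: "Q = {x. \<forall>y\<in>U. inner x y \<le> 1}" and vertices: "bd_vertices (polar_dual Q) = U"
  shows "bd_faces (polar_dual Q) = {U \<inter> {y. inner x y = 1} | x. x \<in> Q \<and> U \<inter> {y. inner x y = 1} \<noteq> {}}"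
proof -
  have D: "polar_dual Q = convex hull U"
    unfolding Q using polar_dual_halfspaces_eq_convex_hull assms(1,3) .
  have ext: "{v. v extreme_point_of polar_dual Q \<and> v \<in> F} = U \<inter> F" for F
    using vertices by (auto simp: bd_vertices_def)
  show ?thesis
    unfolding bd_faces_def ext
  proof (intro set_eqI iffI)
    fix T assume "T \<in> {U \<inter> F | F. F face_of polar_dual Q \<and> F \<noteq> {} \<and> F \<noteq> polar_dual Q}"
    then obtain F where T: "T = U \<inter> F" and F: "F face_of convex hull U" "F \<noteq> {}" "F \<noteq> convex hull U"
      unfolding D by blast
    obtain x where x: "\<forall>y\<in>U. inner x y \<le> 1" "F = convex hull U \<inter> {y. inner x y = 1}"
      using proper_face_exposed_by_polar[OF assms(1-3) F(1,3)] .
    have "x \<in> Q" using x(1) Q by simp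
    have "T = U \<inter> {y. inner x y = 1}" using T x(2) hull_subset[of U convex] by blast
    moreover have "U \<inter> {y. inner x y = 1} \<noteq> {}"
      using polar_dual_supporting_face_eq[OF assms(1) D \<open>x \<in> Q\<close>] x(2) D F(2) by auto
    ultimately show "T \<in> {U \<inter> {y. inner x y = 1} | x. x \<in> Q \<and> U \<inter> {y. inner x y = 1} \<noteq> {}}"
      using \<open>x \<in> Q\<close> by blast
  next
    fix T assume "T \<in> {U \<inter> {y. inner x y = 1} | x. x \<in> Q \<and> U \<inter> {y. inner x y = 1} \<noteq> {}}"
    then obtain x where T: "T = U \<inter> {y. inner x y = 1}" "T \<noteq> {}" and "x \<in> Q" by blast
    let ?F = "polar_dual Q \<inter> {y. inner x y = 1}"
    have "T = U \<inter> ?F" using T(1) D hull_subset[of U convex] by blast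
    moreover have "?F \<noteq> {}" using T D hull_subset[of U convex] by blast
    moreover have "0 \<notin> ?F" by simp
    then have "?F \<noteq> polar_dual Q" using assms(3) D by blast
    ultimately show "T \<in> {U \<inter> F | F. F face_of polar_dual Q \<and> F \<noteq> {} \<and> F \<noteq> polar_dual Q}"
      using polar_dual_supporting_face[OF \<open>x \<in> Q\<close>] by blast
  qed
qed

section \<open>Joins of boundaries of simplices\<close>

definition simplex_boundary_join :: "'j set \<Rightarrow> ('j \<Rightarrow> 'a set) \<Rightarrow> 'a set set" where
  "simplex_boundary_join J B = {\<sigma>. \<sigma> \<noteq> {} \<and> \<sigma> \<subseteq> (\<Union>j\<in>J. B j) \<and> (\<forall>j\<in>J. \<not> B j \<subseteq> \<sigma>)}"

definition active_set :: "('i \<Rightarrow> 'a::real_inner) \<Rightarrow> 'i set \<Rightarrow> 'a \<Rightarrow> 'i set" where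
  "active_set u I x = {a\<in>I. inner x (u a) = 1}"

lemma complex_iso_trans:
  assumes "complex_iso V1 F1 V2 F2" "complex_iso V2 F2 V3 F3"
  shows "complex_iso V1 F1 V3 F3"
proof -
  obtain f g where "bij_betw f V1 V2" "(\<lambda>\<sigma>. f ` \<sigma>) ` F1 = F2" "bij_betw g V2 V3" "(\<lambda>\<sigma>. g ` \<sigma>) ` F2 = F3"
    using assms unfolding complex_iso_def by blast
  moreover have "(\<lambda>\<sigma>. (g \<circ> f) ` \<sigma>) ` F1 = (\<lambda>\<sigma>. g ` \<sigma>) ` ((\<lambda>\<sigma>. f ` \<sigma>) ` F1)"
    by (simp add: image_comp)
  ultimately show ?thesis unfolding complex_iso_def by (metis bij_betw_trans)
qed

lemma glue_bij_betw_disjoint_family: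
  assumes f: "\<And>j. j \<in> J \<Longrightarrow> bij_betw (f j) (A j) (B j)"
    and disj: "disjoint_family_on A J" "disjoint_family_on B J"
  shows "\<exists>F. bij_betw F (\<Union>j\<in>J. A j) (\<Union>j\<in>J. B j) \<and> (\<forall>j\<in>J. F ` A j = B j)"
proof -
  define F where "F x = f (SOME j. j \<in> J \<and> x \<in> A j) x" for x
  have F_eq: "F x = f j x" if "j \<in> J" "x \<in> A j" for j x
  proof -
    have "(SOME j. j \<in> J \<and> x \<in> A j) = j"
      using that disj(1) by (intro some_equality) (auto simp: disjoint_family_on_def)
    then show ?thesis by (simp add: F_def)
  qed
  have F_block: "bij_betw F (A j) (B j)" if "j \<in> J" for j
    using bij_betw_cong[of "A j" F "f j" "B j"] F_eq[OF that] f[OF that] by blast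
  then have "bij_betw F (\<Union>j\<in>J. A j) (\<Union>j\<in>J. B j)"
    using bij_betw_UNION_disjoint disj(2) by blast
  moreover have "\<forall>j\<in>J. F ` A j = B j" using F_block by (simp add: bij_betw_def)
  ultimately show ?thesis by blast
qed

lemma simplex_boundary_join_iso:
  assumes "\<And>j. j \<in> J \<Longrightarrow> bij_betw (f j) (A j) (B j)"
    and "disjoint_family_on A J" "disjoint_family_on B J"
  shows "complex_iso (\<Union>j\<in>J. A j) (simplex_boundary_join J A) (\<Union>j\<in>J. B j) (simplex_boundary_join J B)"
proof -
  obtain F where bij: "bij_betw F (\<Union>j\<in>J. A j) (\<Union>j\<in>J. B j)" and F_image: "\<And>j. j \<in> J \<Longrightarrow> F ` A j = B j"
    using glue_bij_betw_disjoint_family[OF assms] by blast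
  then have inj: "inj_on F (\<Union>j\<in>J. A j)" and img: "F ` (\<Union>j\<in>J. A j) = (\<Union>j\<in>J. B j)"
    by (simp_all add: bij_betw_def)
  have block_iff: "A j \<subseteq> \<sigma> \<longleftrightarrow> B j \<subseteq> F ` \<sigma>" if "j \<in> J" "\<sigma> \<subseteq> (\<Union>j\<in>J. A j)" for j \<sigma>
    using inj_on_image_subset_iff[OF inj _ that(2), of "A j"] F_image[OF that(1)] that(1) by blast
  have faces: "\<sigma> \<in> simplex_boundary_join J A \<longleftrightarrow> F ` \<sigma> \<in> simplex_boundary_join J B"
    if "\<sigma> \<subseteq> (\<Union>j\<in>J. A j)" for \<sigma>
  proof -
    have "F ` \<sigma> \<subseteq> (\<Union>j\<in>J. B j)" using that img by blast
    then show ?thesis using that block_iff by (simp add: simplex_boundary_join_def)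
  qed
  have "(\<lambda>\<sigma>. F ` \<sigma>) ` simplex_boundary_join J A = simplex_boundary_join J B"
  proof (intro set_eqI iffI)
    fix \<tau> assume \<tau>: "\<tau> \<in> simplex_boundary_join J B"
    define \<sigma> where "\<sigma> = (\<Union>j\<in>J. A j) \<inter> F -` \<tau>"
    have "\<tau> \<subseteq> F ` (\<Union>j\<in>J. A j)" using \<tau> img by (simp add: simplex_boundary_join_def)
    then have "F ` \<sigma> = \<tau>" unfolding \<sigma>_def by blast
    moreover have "\<sigma> \<subseteq> (\<Union>j\<in>J. A j)" unfolding \<sigma>_def by blast
    ultimately show "\<tau> \<in> (\<lambda>\<sigma>. F ` \<sigma>) ` simplex_boundary_join J A" using \<tau> faces by blast
  next
    fix \<tau> assume "\<tau> \<in> (\<lambda>\<sigma>. F ` \<sigma>) ` simplex_boundary_join J A"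
    then show "\<tau> \<in> simplex_boundary_join J B" using faces by (auto simp: simplex_boundary_join_def)
  qed
  with bij show ?thesis unfolding complex_iso_def by blast
qed

lemma positive_dependence_nonpos_imp_zero:
  fixes u :: "'i \<Rightarrow> 'a::real_inner"
  assumes "finite A" "\<And>a. a \<in> A \<Longrightarrow> \<gamma> a > 0" "(\<Sum>a\<in>A. \<gamma> a *\<^sub>R u a) = 0"
    and "\<And>a. a \<in> A \<Longrightarrow> inner w (u a) \<le> 0" "a \<in> A"
  shows "inner w (u a) = 0"
proof -
  have nonneg: "- (\<gamma> a * inner w (u a)) \<ge> 0" if "a \<in> A" for a
    using assms(2,4)[OF that] by (simp add: mult_nonneg_nonpos)
  have "(\<Sum>a\<in>A. - (\<gamma> a * inner w (u a))) = - inner w (\<Sum>a\<in>A. \<gamma> a *\<^sub>R u a)"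
    by (simp add: inner_sum_right sum_negf)
  also have "\<dots> = 0" using assms(3) by simp
  finally have "- (\<gamma> a * inner w (u a)) = 0"
    using sum_nonneg_eq_0_iff[OF assms(1), of "\<lambda>a. - (\<gamma> a * inner w (u a))"] nonneg assms(5)
    by blast
  with assms(2)[OF assms(5)] show ?thesis by simp
qed

lemma positive_dependence_not_all_active:
  fixes u :: "'i \<Rightarrow> 'a::real_inner"
  assumes "finite A" "A \<noteq> {}" "\<And>a. a \<in> A \<Longrightarrow> \<gamma> a > 0" "(\<Sum>a\<in>A. \<gamma> a *\<^sub>R u a) = 0"
  shows "\<not> A \<subseteq> active_set u I x"
proof
  assume "A \<subseteq> active_set u I x"
  then have "(\<Sum>a\<in>A. \<gamma> a) = inner x (\<Sum>a\<in>A. \<gamma> a *\<^sub>R u a)"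
    by (auto simp: inner_sum_right active_set_def intro!: sum.cong)
  also have "\<dots> = 0" using assms(4) by simp
  moreover have "(\<Sum>a\<in>A. \<gamma> a) > 0" using assms(1-3) by (rule sum_pos)
  ultimately show False by simp
qed

lemma inj_on_if_active_singletons:
  assumes "\<And>a. a \<in> I \<Longrightarrow> \<exists>x. active_set u I x = {a}"
  shows "inj_on u I"
proof
  fix a b assume "a \<in> I" "b \<in> I" "u a = u b"
  obtain x where x: "active_set u I x = {a}" using assms[OF \<open>a \<in> I\<close>] by blast
  have "a \<in> active_set u I x" using x by simp
  then have "inner x (u b) = 1" using \<open>u a = u b\<close> by (simp add: active_set_def)
  then have "b \<in> active_set u I x" using \<open>b \<in> I\<close> by (simp add: active_set_def)
  then show "a = b" using x by simp
qed

lemma no_proper_halfspace_if_positively_dependent: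
  fixes u :: "'i \<Rightarrow> 'a::real_inner"
  assumes "\<And>j. j \<in> J \<Longrightarrow> finite (blk j)" "\<And>a. a \<in> (\<Union>j\<in>J. blk j) \<Longrightarrow> \<gamma> a > 0"
    and "\<And>j. j \<in> J \<Longrightarrow> (\<Sum>a\<in>blk j. \<gamma> a *\<^sub>R u a) = 0"
  shows "no_proper_halfspace (u ` (\<Union>j\<in>J. blk j))"
  unfolding no_proper_halfspace_def
proof (intro allI impI ballI)
  fix w y assume nonpos: "\<forall>y\<in>u ` (\<Union>j\<in>J. blk j). inner w y \<le> 0" and "y \<in> u ` (\<Union>j\<in>J. blk j)"
  then obtain j a where "j \<in> J" "a \<in> blk j" "y = u a" by blast
  then show "inner w y = 0"
    using positive_dependence_nonpos_imp_zero[of "blk j" \<gamma> u w a] assms nonpos by blast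
qed

lemma active_sets_eq_simplex_boundary_join:
  fixes u :: "'i \<Rightarrow> 'a::real_inner" and J :: "'j set" and blk :: "'j \<Rightarrow> 'i set"
  defines "I \<equiv> \<Union>j\<in>J. blk j"
  assumes blk: "\<And>j. j \<in> J \<Longrightarrow> finite (blk j) \<and> blk j \<noteq> {}" and \<gamma>: "\<And>a. a \<in> I \<Longrightarrow> \<gamma> a > 0"
    and dep: "\<And>j. j \<in> J \<Longrightarrow> (\<Sum>a\<in>blk j. \<gamma> a *\<^sub>R u a) = 0"
    and realize: "\<And>\<sigma>. \<sigma> \<in> simplex_boundary_join J blk \<Longrightarrow> \<exists>x\<in>Q. active_set u I x = \<sigma>"
  shows "{active_set u I x | x. x \<in> Q \<and> active_set u I x \<noteq> {}} = simplex_boundary_join J blk"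
proof (intro set_eqI iffI)
  fix \<sigma> assume "\<sigma> \<in> {active_set u I x | x. x \<in> Q \<and> active_set u I x \<noteq> {}}"
  moreover have "\<not> blk j \<subseteq> active_set u I x" if "j \<in> J" for j x
  proof (rule positive_dependence_not_all_active)
    show "finite (blk j)" "blk j \<noteq> {}" using blk[OF that] by auto
    show "\<gamma> a > 0" if "a \<in> blk j" for a using \<gamma> that \<open>j \<in> J\<close> by (auto simp: I_def)
  qed (rule dep[OF that])
  ultimately show "\<sigma> \<in> simplex_boundary_join J blk"
    by (auto simp: simplex_boundary_join_def active_set_def I_def)
next
  fix \<sigma> assume \<sigma>: "\<sigma> \<in> simplex_boundary_join J blk"
  then obtain x where "x \<in> Q" "active_set u I x = \<sigma>" using realize by blast
  moreover have "\<sigma> \<noteq> {}" using \<sigma> by (simp add: simplex_boundary_join_def)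
  ultimately show "\<sigma> \<in> {active_set u I x | x. x \<in> Q \<and> active_set u I x \<noteq> {}}" by blast
qed

lemma polar_dual_boundary_complex_join:
  fixes u :: "'i \<Rightarrow> 'a::euclidean_space" and J :: "'j set" and blk :: "'j \<Rightarrow> 'i set"
  defines "I \<equiv> \<Union>j\<in>J. blk j"
  assumes "finite J" "J \<noteq> {}"
    and blk: "\<And>j. j \<in> J \<Longrightarrow> finite (blk j) \<and> card (blk j) \<ge> 2"
    and \<gamma>: "\<And>a. a \<in> I \<Longrightarrow> \<gamma> a > 0"
    and dep: "\<And>j. j \<in> J \<Longrightarrow> (\<Sum>a\<in>blk j. \<gamma> a *\<^sub>R u a) = 0"
    and Q: "Q = {x. \<forall>a\<in>I. inner x (u a) \<le> 1}"
    and realize: "\<And>\<sigma>. \<sigma> \<in> simplex_boundary_join J blk \<Longrightarrow> \<exists>x\<in>Q. active_set u I x = \<sigma>"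
  shows "complex_iso I (simplex_boundary_join J blk) (bd_vertices (polar_dual Q)) (bd_faces (polar_dual Q))"
proof -
  have blk_ne: "finite (blk j) \<and> blk j \<noteq> {}" if "j \<in> J" for j using blk[OF that] by auto
  have "finite I" "I \<noteq> {}" using assms(2,3) blk_ne by (auto simp: I_def)
  then have fin: "finite (u ` I)" by simp
  have nph: "no_proper_halfspace (u ` I)"
    unfolding I_def
    by (rule no_proper_halfspace_if_positively_dependent[of J blk \<gamma>])
      (use blk_ne \<gamma> dep in \<open>auto simp: I_def\<close>)
  have Q': "Q = {x. \<forall>y\<in>u ` I. inner x y \<le> 1}" using Q by auto
  have active_image: "u ` I \<inter> {y. inner x y = 1} = u ` active_set u I x" for x
    by (auto simp: active_set_def)
  have single: "\<exists>x\<in>Q. active_set u I x = {a}" if "a \<in> I" for a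
  proof (rule realize)
    have "\<not> blk j \<subseteq> {a}" if "j \<in> J" for j
      using blk[OF that] card_mono[of "{a}" "blk j"] by auto
    then show "{a} \<in> simplex_boundary_join J blk"
      using \<open>a \<in> I\<close> by (auto simp: simplex_boundary_join_def I_def)
  qed
  have zero: "0 \<in> convex hull (u ` I)"
    using zero_in_convex_hull_if_no_proper_halfspace[OF fin _ nph] \<open>I \<noteq> {}\<close> by simp
  have vertices: "bd_vertices (polar_dual Q) = u ` I"
  proof (rule bd_vertices_polar_dual[OF fin])
    show "polar_dual Q = convex hull (u ` I)"
      unfolding Q' by (rule polar_dual_halfspaces_eq_convex_hull[OF fin zero])
    show "\<exists>x\<in>Q. u ` I \<inter> {y'. inner x y' = 1} = {y}" if "y \<in> u ` I" for y
      using that single active_image by (metis image_empty image_iff image_insert)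
  qed
  have active_sets: "{active_set u I x | x. x \<in> Q \<and> active_set u I x \<noteq> {}} = simplex_boundary_join J blk"
    unfolding I_def
    by (rule active_sets_eq_simplex_boundary_join[of J blk \<gamma> u Q])
      (use blk_ne \<gamma> dep realize in \<open>auto simp: I_def\<close>)
  have "bd_faces (polar_dual Q)
      = {u ` I \<inter> {y. inner x y = 1} | x. x \<in> Q \<and> u ` I \<inter> {y. inner x y = 1} \<noteq> {}}"
    by (rule bd_faces_polar_dual[OF fin nph zero Q' vertices])
  also have "\<dots> = (\<lambda>\<sigma>. u ` \<sigma>) ` {active_set u I x | x. x \<in> Q \<and> active_set u I x \<noteq> {}}"
    unfolding active_image by blast
  finally have faces: "(\<lambda>\<sigma>. u ` \<sigma>) ` simplex_boundary_join J blk = bd_faces (polar_dual Q)"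
    by (simp only: active_sets)
  have "inj_on u I" using single by (intro inj_on_if_active_singletons) blast
  with vertices faces show ?thesis unfolding complex_iso_def bij_betw_def by blast
qed

section \<open>Products of simplices\<close>

lemma affine_pos_at_interior:
  fixes r :: "'a::real_inner"
  assumes "\<And>x. x \<in> S \<Longrightarrow> inner r x + \<beta> \<ge> 0" "r \<noteq> 0" "c \<in> interior S"
  shows "inner r c + \<beta> > 0"
proof -
  obtain \<epsilon> where "\<epsilon> > 0" "ball c \<epsilon> \<subseteq> S" using assms(3) mem_interior by blast
  define z where "z = c - (\<epsilon> / (2 * norm r)) *\<^sub>R r"
  have "norm r > 0" using assms(2) by simp
  then have "dist c z < \<epsilon>" using \<open>\<epsilon> > 0\<close> by (simp add: z_def dist_norm)
  then have "inner r z + \<beta> \<ge> 0" using assms(1) \<open>ball c \<epsilon> \<subseteq> S\<close> by auto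
  moreover have "inner r z = inner r c - \<epsilon> * norm r / 2"
    using \<open>norm r > 0\<close> by (simp add: z_def inner_diff_right power2_eq_square flip: power2_norm_eq_inner)
  moreover have "\<epsilon> * norm r / 2 > 0" using \<open>\<epsilon> > 0\<close> \<open>norm r > 0\<close> by simp
  ultimately show ?thesis by linarith
qed

definition coordinate_subspace :: "'d set \<Rightarrow> (real^'d) set" where
  "coordinate_subspace B = {x. \<forall>k. k \<notin> B \<longrightarrow> x $ k = 0}"

lemma linear_block_proj: "linear (block_proj B)"
  by (rule linearI) (auto simp: block_proj_def vec_eq_iff)

lemma block_proj_in_coordinate_subspace: "block_proj B x \<in> coordinate_subspace B"
  by (simp add: block_proj_def coordinate_subspace_def)

lemma block_proj_id: "x \<in> coordinate_subspace B \<Longrightarrow> block_proj B x = x"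
  by (auto simp: block_proj_def coordinate_subspace_def vec_eq_iff)

lemma block_proj_disjoint: "B \<inter> B' = {} \<Longrightarrow> x \<in> coordinate_subspace B' \<Longrightarrow> block_proj B x = 0"
  by (auto simp: block_proj_def coordinate_subspace_def vec_eq_iff)

lemma subspace_coordinate_subspace: "subspace (coordinate_subspace B)"
  by (auto simp: subspace_def coordinate_subspace_def)

lemma dim_coordinate_subspace: "dim (coordinate_subspace B) = card B"
  using dim_substandard_cart[where 'a=real, of B] by (simp add: coordinate_subspace_def dim_vec_eq)

lemma affine_hull_eq_coordinate_subspace:
  assumes "\<not> affine_dependent C" "C \<subseteq> coordinate_subspace B" "card C = card B + 1"
  shows "affine hull C = coordinate_subspace B"
proof (rule affine_dim_equal)
  show "affine (coordinate_subspace B)"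
    by (rule subspace_imp_affine[OF subspace_coordinate_subspace])
  then show "affine hull C \<subseteq> coordinate_subspace B"
    using assms(2) by (rule hull_minimal[rotated])
  show "affine hull C \<noteq> {}" using assms(3) by auto
  have "aff_dim C = int (card B)" using aff_dim_affine_independent[OF assms(1)] assms(3) by simp
  then show "aff_dim (affine hull C) = aff_dim (coordinate_subspace B)"
    by (simp add: aff_dim_subspace[OF subspace_coordinate_subspace] dim_coordinate_subspace)
qed (rule affine_affine_hull)

locale simplex_product =
  fixes J :: "'j set" and B :: "'j \<Rightarrow> 'd::finite set" and C :: "'j \<Rightarrow> (real^'d) set"
  assumes finite_J: "finite J"
    and disjoint_B: "disjoint_family_on B J"
    and independent_C: "\<And>j. j \<in> J \<Longrightarrow> \<not> affine_dependent (C j)"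
    and C_subspace: "\<And>j. j \<in> J \<Longrightarrow> C j \<subseteq> coordinate_subspace (B j)"
    and card_C: "\<And>j. j \<in> J \<Longrightarrow> card (C j) = card (B j) + 1"
    and B_nonempty: "\<And>j. j \<in> J \<Longrightarrow> B j \<noteq> {}"
begin

definition simplex_prod :: "(real^'d) set" where
  "simplex_prod = {x. \<forall>j\<in>J. block_proj (B j) x \<in> convex hull (C j)}"

definition block_bary :: "'j \<times> (real^'d) \<Rightarrow> real^'d \<Rightarrow> real" where
  "block_bary p x = bary_coord (C (fst p)) (block_proj (B (fst p)) x) (snd p)"

text \<open>\<open>block_bary p\<close> is affine; the adjoint of its linear part, evaluated at \<open>1\<close>, is its gradient.\<close>
definition block_bary_grad :: "'j \<times> (real^'d) \<Rightarrow> real^'d" where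
  "block_bary_grad p = adjoint (\<lambda>x. block_bary p x - block_bary p 0) 1"

lemma finite_C: "j \<in> J \<Longrightarrow> finite (C j)"
  by (rule card_ge_0_finite) (simp add: card_C)

lemma card_C_ge_2:
  assumes "j \<in> J"
  shows "card (C j) \<ge> 2"
proof -
  have "card (B j) > 0" using B_nonempty[OF assms] by (simp add: card_gt_0_iff)
  then show ?thesis by (simp add: card_C[OF assms])
qed

lemma affine_hull_C: "j \<in> J \<Longrightarrow> affine hull (C j) = coordinate_subspace (B j)"
  by (rule affine_hull_eq_coordinate_subspace[OF independent_C C_subspace card_C])

lemma block_proj_in_affine_hull: "j \<in> J \<Longrightarrow> block_proj (B j) x \<in> affine hull (C j)"
  using affine_hull_C block_proj_in_coordinate_subspace by blast

lemma mem_simplex_prod_iff: "x \<in> simplex_prod \<longleftrightarrow> (\<forall>p\<in>Sigma J C. block_bary p x \<ge> 0)"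
  by (auto simp: simplex_prod_def block_bary_def convex_hull_iff_bary_coord_nonneg
      finite_C independent_C block_proj_in_affine_hull)

lemma block_bary_affine:
  assumes "j \<in> J"
  shows "block_bary (j, v) x = inner (block_bary_grad (j, v)) x + block_bary (j, v) 0"
proof -
  have "linear (\<lambda>x. bary_coord (C j) (block_proj (B j) x) v - bary_coord (C j) 0 v)"
    using linear_bary_coord_comp[OF finite_C independent_C linear_block_proj block_proj_in_affine_hull]
      assms by blast
  moreover have "block_proj (B j) 0 = 0" by (simp add: linear_0[OF linear_block_proj])
  ultimately have "linear (\<lambda>x. block_bary (j, v) x - block_bary (j, v) 0)"
    by (simp add: block_bary_def)
  from adjoint_works[OF this, of x 1] show ?thesis
    by (simp add: block_bary_grad_def inner_commute)
qed

lemma sum_block_bary: "j \<in> J \<Longrightarrow> (\<Sum>v\<in>C j. block_bary (j, v) x) = 1"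
  using bary_weights_bary_coord[OF finite_C independent_C block_proj_in_affine_hull]
  by (simp add: block_bary_def bary_weights_def)

lemma sum_block_bary_grad:
  assumes "j \<in> J"
  shows "(\<Sum>v\<in>C j. block_bary_grad (j, v)) = 0"
proof -
  have affine_sum: "inner (\<Sum>v\<in>C j. block_bary_grad (j, v)) x + (\<Sum>v\<in>C j. block_bary (j, v) 0) = 1" for x
  proof -
    have "(\<Sum>v\<in>C j. block_bary (j, v) x) = (\<Sum>v\<in>C j. inner (block_bary_grad (j, v)) x + block_bary (j, v) 0)"
      by (rule sum.cong[OF refl]) (rule block_bary_affine[OF assms])
    with sum_block_bary[OF assms, of x] show ?thesis by (simp add: inner_sum_left sum.distrib)
  qed
  then have "(\<Sum>v\<in>C j. block_bary (j, v) 0) = 1" by (metis inner_zero_right add_0)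
  with affine_sum[of "\<Sum>v\<in>C j. block_bary_grad (j, v)"] show ?thesis by simp
qed

lemma block_bary_vertex:
  assumes "j \<in> J" "w \<in> C j"
  shows "block_bary (j, v) w = (if v = w then 1 else 0)"
proof -
  have "block_proj (B j) w = w" using assms C_subspace block_proj_id by blast
  then show ?thesis
    by (simp add: block_bary_def bary_coord_vertex[OF finite_C[OF assms(1)] independent_C[OF assms(1)] assms(2)])
qed

lemma block_bary_grad_nonzero:
  assumes "p \<in> Sigma J C"
  shows "block_bary_grad p \<noteq> 0"
proof
  assume grad: "block_bary_grad p = 0"
  obtain j v where p: "p = (j, v)" "j \<in> J" "v \<in> C j" using assms by blast
  obtain w where "w \<in> C j" "w \<noteq> v"
  proof -
    have "card (C j - {v}) \<ge> 1" using card_C_ge_2[OF p(2)] p(3) finite_C[OF p(2)] by simp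
    then have "C j - {v} \<noteq> {}" by (intro notI) simp
    then show ?thesis using that by blast
  qed
  then have "block_bary p v \<noteq> block_bary p w" using block_bary_vertex p by simp
  moreover have "block_bary p x = block_bary p 0" for x
    using block_bary_affine[OF p(2), of v x] grad p(1) by simp
  ultimately show False by metis
qed

lemma block_bary_at_barycenters:
  assumes T: "\<And>j. j \<in> J \<Longrightarrow> T j \<subseteq> C j \<and> T j \<noteq> {}"
  obtains z where "\<And>j v. j \<in> J \<Longrightarrow> block_bary (j, v) z = (if v \<in> T j then 1 / card (T j) else 0)"
proof
  define b where "b j = (\<Sum>v\<in>T j. (1 / card (T j)) *\<^sub>R v)" for j
  have b_sub: "b j \<in> coordinate_subspace (B j)" if "j \<in> J" for j
    unfolding b_def using T[OF that] C_subspace[OF that]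
    by (intro subspace_sum[OF subspace_coordinate_subspace] subspace_scale[OF subspace_coordinate_subspace])
      auto
  have proj: "block_proj (B i) (\<Sum>j\<in>J. b j) = b i" if "i \<in> J" for i
  proof -
    have "block_proj (B i) (\<Sum>j\<in>J. b j) = (\<Sum>j\<in>J. block_proj (B i) (b j))"
      by (rule linear_sum[OF linear_block_proj])
    also have "\<dots> = (\<Sum>j\<in>J. if j = i then b i else 0)"
    proof (rule sum.cong[OF refl])
      fix j assume "j \<in> J"
      show "block_proj (B i) (b j) = (if j = i then b i else 0)"
      proof (cases "j = i")
        case True
        then show ?thesis using block_proj_id b_sub[OF that] by simp
      next
        case False
        then have "B i \<inter> B j = {}" using disjoint_B that \<open>j \<in> J\<close> by (auto simp: disjoint_family_on_def)
        then show ?thesis using block_proj_disjoint b_sub[OF \<open>j \<in> J\<close>] False by simp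
      qed
    qed
    also have "\<dots> = b i" using finite_J that by simp
    finally show ?thesis .
  qed
  fix j v assume "j \<in> J"
  then show "block_bary (j, v) (\<Sum>j\<in>J. b j) = (if v \<in> T j then 1 / card (T j) else 0)"
    unfolding block_bary_def fst_conv snd_conv proj[OF \<open>j \<in> J\<close>] unfolding b_def
    using bary_coord_barycenter[OF finite_C independent_C] T by simp
qed

lemma join_face_realized:
  assumes "\<sigma> \<in> simplex_boundary_join J (\<lambda>j. {j} \<times> C j)"
  obtains z where "z \<in> simplex_prod" "{p \<in> Sigma J C. block_bary p z = 0} = \<sigma>"
proof -
  define T where "T j = {v \<in> C j. (j, v) \<notin> \<sigma>}" for j
  have T: "T j \<subseteq> C j \<and> T j \<noteq> {}" if "j \<in> J" for j
    using assms that by (auto simp: simplex_boundary_join_def T_def)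
  then obtain z where z: "\<And>j v. j \<in> J \<Longrightarrow> block_bary (j, v) z = (if v \<in> T j then 1 / card (T j) else 0)"
    using block_bary_at_barycenters by blast
  have "card (T j) > 0" if "j \<in> J" for j
  proof -
    have "finite (T j)" using T[OF that] finite_C[OF that] finite_subset by blast
    then show ?thesis using T[OF that] by (simp add: card_gt_0_iff)
  qed
  then have zero_iff: "block_bary (j, v) z = 0 \<longleftrightarrow> (j, v) \<in> \<sigma>" if "j \<in> J" "v \<in> C j" for j v
    using z[OF that(1)] that by (simp add: T_def)
  have "{p \<in> Sigma J C. block_bary p z = 0} = \<sigma>"
  proof (intro set_eqI iffI)
    fix p assume "p \<in> {p \<in> Sigma J C. block_bary p z = 0}"
    then obtain j v where "p = (j, v)" "j \<in> J" "v \<in> C j" "block_bary (j, v) z = 0" by blast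
    then show "p \<in> \<sigma>" using zero_iff by simp
  next
    fix p assume "p \<in> \<sigma>"
    then obtain j v where "p = (j, v)" "j \<in> J" "v \<in> C j"
      using assms by (auto simp: simplex_boundary_join_def)
    then show "p \<in> {p \<in> Sigma J C. block_bary p z = 0}" using zero_iff \<open>p \<in> \<sigma>\<close> by simp
  qed
  moreover have "z \<in> simplex_prod" unfolding mem_simplex_prod_iff by (clarsimp simp: z)
  ultimately show thesis using that by blast
qed

lemma block_bary_pos_at_interior:
  assumes "c \<in> interior simplex_prod" "p \<in> Sigma J C"
  shows "block_bary p c > 0"
proof -
  obtain j v where p: "p = (j, v)" "j \<in> J" using assms(2) by blast
  have affine: "block_bary p x = inner (block_bary_grad p) x + block_bary p 0" for x
    using block_bary_affine[OF p(2), of v x] p(1) by simp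
  have "inner (block_bary_grad p) x + block_bary p 0 \<ge> 0" if "x \<in> simplex_prod" for x
    using that assms(2) mem_simplex_prod_iff affine[of x] by metis
  from affine_pos_at_interior[OF this block_bary_grad_nonzero[OF assms(2)] assms(1)] show ?thesis
    using affine[of c] by simp
qed

text \<open>The facet \<open>block_bary p = 0\<close> of the product translated by \<open>-c\<close> is
  \<open>{x. inner x (polar_vertex c p) = 1}\<close>; these are the vertices of the polar.\<close>
definition polar_vertex :: "real^'d \<Rightarrow> 'j \<times> (real^'d) \<Rightarrow> real^'d" where
  "polar_vertex c p = - (1 / block_bary p c) *\<^sub>R block_bary_grad p"

lemma inner_polar_vertex:
  assumes "c \<in> interior simplex_prod" "p \<in> Sigma J C"
  shows "inner x (polar_vertex c p) = 1 - block_bary p (x + c) / block_bary p c"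
proof -
  obtain j v where p: "p = (j, v)" "j \<in> J" using assms(2) by blast
  have "block_bary p (x + c) = inner (block_bary_grad p) x + block_bary p c"
    using block_bary_affine[OF p(2), of v "x + c"] block_bary_affine[OF p(2), of v c] p(1)
    by (simp add: inner_add_right)
  with block_bary_pos_at_interior[OF assms] show ?thesis
    by (simp add: polar_vertex_def field_simps inner_commute)
qed

lemma translated_simplex_prod:
  assumes "c \<in> interior simplex_prod"
  shows "(\<lambda>x. x - c) ` simplex_prod = {x. \<forall>p\<in>Sigma J C. inner x (polar_vertex c p) \<le> 1}"
proof -
  have "x \<in> (\<lambda>x. x - c) ` simplex_prod \<longleftrightarrow> x + c \<in> simplex_prod" for x
    by (auto intro: rev_image_eqI[of "x + c"])
  moreover have "block_bary p (x + c) \<ge> 0 \<longleftrightarrow> inner x (polar_vertex c p) \<le> 1" if "p \<in> Sigma J C" for p x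
    using inner_polar_vertex[OF assms that] block_bary_pos_at_interior[OF assms that]
    by (simp add: zero_le_divide_iff)
  ultimately show ?thesis by (auto simp: mem_simplex_prod_iff)
qed

lemma sum_polar_vertex_block:
  assumes "c \<in> interior simplex_prod" "j \<in> J"
  shows "(\<Sum>p\<in>{j} \<times> C j. block_bary p c *\<^sub>R polar_vertex c p) = 0"
proof -
  have pair: "{j} \<times> C j = Pair j ` C j" by auto
  have "(\<Sum>p\<in>{j} \<times> C j. block_bary p c *\<^sub>R polar_vertex c p) = (\<Sum>p\<in>{j} \<times> C j. - block_bary_grad p)"
    using block_bary_pos_at_interior[OF assms(1)] assms(2)
    by (intro sum.cong) (fastforce simp: polar_vertex_def)+
  also have "\<dots> = - (\<Sum>v\<in>C j. block_bary_grad (j, v))"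
    unfolding pair by (simp add: sum.reindex inj_on_def sum_negf)
  finally show ?thesis using sum_block_bary_grad[OF assms(2)] by simp
qed

lemma join_face_active_set:
  assumes "c \<in> interior simplex_prod" "\<sigma> \<in> simplex_boundary_join J (\<lambda>j. {j} \<times> C j)"
  shows "\<exists>x\<in>(\<lambda>x. x - c) ` simplex_prod. active_set (polar_vertex c) (Sigma J C) x = \<sigma>"
proof -
  obtain z where z: "z \<in> simplex_prod" "{p \<in> Sigma J C. block_bary p z = 0} = \<sigma>"
    using join_face_realized[OF assms(2)] .
  have "inner (z - c) (polar_vertex c p) = 1 \<longleftrightarrow> block_bary p z = 0" if "p \<in> Sigma J C" for p
    using inner_polar_vertex[OF assms(1) that] block_bary_pos_at_interior[OF assms(1) that] by simp
  then have "active_set (polar_vertex c) (Sigma J C) (z - c) = \<sigma>"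
    using z(2) by (auto simp: active_set_def)
  with z(1) show ?thesis by blast
qed

lemma polar_dual_simplex_prod_boundary_complex:
  assumes "J \<noteq> {}" "c \<in> interior simplex_prod"
  shows "complex_iso (Sigma J C) (simplex_boundary_join J (\<lambda>j. {j} \<times> C j))
    (bd_vertices (polar_dual ((\<lambda>x. x - c) ` simplex_prod)))
    (bd_faces (polar_dual ((\<lambda>x. x - c) ` simplex_prod)))"
proof -
  have Sigma_eq: "Sigma J C = (\<Union>j\<in>J. {j} \<times> C j)" by auto
  have "complex_iso (\<Union>j\<in>J. {j} \<times> C j) (simplex_boundary_join J (\<lambda>j. {j} \<times> C j))
    (bd_vertices (polar_dual ((\<lambda>x. x - c) ` simplex_prod)))
    (bd_faces (polar_dual ((\<lambda>x. x - c) ` simplex_prod)))"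
  proof (rule polar_dual_boundary_complex_join[where \<gamma> = "\<lambda>p. block_bary p c" and u = "polar_vertex c"])
    show "finite J" "J \<noteq> {}" by (fact finite_J assms(1))+
    show "finite ({j} \<times> C j) \<and> card ({j} \<times> C j) \<ge> 2" if "j \<in> J" for j
      using finite_C[OF that] card_C_ge_2[OF that] by (simp add: card_cartesian_product_singleton)
    show "block_bary p c > 0" if "p \<in> (\<Union>j\<in>J. {j} \<times> C j)" for p
      using block_bary_pos_at_interior[OF assms(2)] that Sigma_eq by blast
    show "(\<Sum>p\<in>{j} \<times> C j. block_bary p c *\<^sub>R polar_vertex c p) = 0" if "j \<in> J" for j
      using sum_polar_vertex_block[OF assms(2) that] .
    show "(\<lambda>x. x - c) ` simplex_prod = {x. \<forall>p\<in>\<Union>j\<in>J. {j} \<times> C j. inner x (polar_vertex c p) \<le> 1}"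
      using translated_simplex_prod[OF assms(2)] Sigma_eq by simp
    show "\<exists>x\<in>(\<lambda>x. x - c) ` simplex_prod. active_set (polar_vertex c) (\<Union>j\<in>J. {j} \<times> C j) x = \<sigma>"
      if "\<sigma> \<in> simplex_boundary_join J (\<lambda>j. {j} \<times> C j)" for \<sigma>
      using join_face_active_set[OF assms(2) that] Sigma_eq by simp
  qed
  then show ?thesis by (simp only: Sigma_eq)
qed

end

section \<open>The complex K(P)\<close>

lemma is_partitionD:
  assumes "is_partition n P"
  shows partition_disjoint: "disjoint_family_on (nth P) {..<length P}"
    and partition_Union: "(\<Union>j<length P. P!j) = {1..n+1}"
    and partition_nonempty: "j < length P \<Longrightarrow> P!j \<noteq> {}"
proof -
  have "set P = nth P ` {..<length P}" by (auto simp: in_set_conv_nth)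
  with assms show "disjoint_family_on (nth P) {..<length P}" "(\<Union>j<length P. P!j) = {1..n+1}"
    "j < length P \<Longrightarrow> P!j \<noteq> {}"
    by (auto simp: is_partition_def disjoint_family_on_def)
qed

lemma partition_block_finite: "is_partition n P \<Longrightarrow> j < length P \<Longrightarrow> finite (P!j)"
  using partition_Union[of n P] finite_subset[of "P!j" "{1..n+1}"] by blast

definition K_block :: "nat set list \<Rightarrow> nat \<Rightarrow> (nat + nat) set" where
  "K_block P j = insert (Inr j) (Inl ` (P!j))"

definition block_index :: "nat set list \<Rightarrow> nat \<Rightarrow> nat" where
  "block_index P i = (THE j. j < length P \<and> i \<in> P!j)"

lemma block_index_eq:
  assumes "is_partition n P" "j < length P" "i \<in> P!j"
  shows "block_index P i = j"
  unfolding block_index_def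
  using assms partition_disjoint[OF assms(1)] by (auto simp: disjoint_family_on_def)

lemma card_K_block: "finite (P!j) \<Longrightarrow> card (K_block P j) = card (P!j) + 1"
  by (auto simp: K_block_def card_insert_if card_image)

lemma disjoint_K_block: "is_partition n P \<Longrightarrow> disjoint_family_on (K_block P) {..<length P}"
  using partition_disjoint[of n P] by (auto simp: disjoint_family_on_def K_block_def)

lemma K_vertices_eq:
  assumes "is_partition n P"
  shows "K_vertices n P = (\<Union>j<length P. K_block P j)"
proof -
  have "(\<Union>j<length P. K_block P j) = Inl ` (\<Union>j<length P. P!j) \<union> Inr ` {..<length P}"
    by (auto simp: K_block_def)
  with partition_Union[OF assms] show ?thesis by (simp add: K_vertices_def)
qed

lemma K_facet_subset_vertices: "F \<in> K_facets n P \<Longrightarrow> F \<subseteq> K_vertices n P"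
  by (auto simp: K_facets_def K_vertices_def)

lemma K_facet_misses_block:
  assumes "is_partition n P" "F \<in> K_facets n P" "j < length P"
  shows "\<not> K_block P j \<subseteq> F"
proof
  assume sub: "K_block P j \<subseteq> F"
  obtain y where F: "F = y ` {1..n+1}"
    and y: "\<forall>i\<in>{1..n+1}. y i = Inl i \<or> (\<exists>j<length P. i \<in> P!j \<and> y i = Inr j)"
    using assms(2) by (auto simp: K_facets_def)
  have "K_block P j \<subseteq> y ` (P!j)"
  proof
    fix s assume s: "s \<in> K_block P j"
    then obtain i where i: "i \<in> {1..n+1}" "s = y i" using sub F by blast
    have "i \<in> P!j"
      using y[rule_format, OF i(1)] s i(2) partition_disjoint[OF assms(1)] assms(3)
      by (auto simp: K_block_def disjoint_family_on_def)
    with i(2) show "s \<in> y ` (P!j)" by blast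
  qed
  then have "card (K_block P j) \<le> card (P!j)"
    using partition_block_finite[OF assms(1,3)] card_image_le card_mono finite_imageI le_trans by metis
  then show False using card_K_block partition_block_finite[OF assms(1,3)] by simp
qed

lemma K_facet_through_join_face:
  assumes "is_partition n P" "\<sigma> \<in> simplex_boundary_join {..<length P} (K_block P)"
  obtains F where "F \<in> K_facets n P" "\<sigma> \<subseteq> F"
proof -
  have "\<forall>j<length P. \<exists>s. s \<in> K_block P j \<and> s \<notin> \<sigma>"
    using assms(2) by (auto simp: simplex_boundary_join_def)
  then obtain m where m: "\<And>j. j < length P \<Longrightarrow> m j \<in> K_block P j \<and> m j \<notin> \<sigma>" by metis
  define y where "y i = (if m (block_index P i) = Inl i then Inr (block_index P i) else Inl i)" for i
  have index: "block_index P i = j" if "j < length P" "i \<in> P!j" for i j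
    using block_index_eq[OF assms(1) that] .
  have block_sub: "P!j \<subseteq> {1..n+1}" if "j < length P" for j
    using that partition_Union[OF assms(1)] by blast
  have covered: "\<exists>j<length P. i \<in> P!j" if "i \<in> {1..n+1}" for i
    using that partition_Union[OF assms(1)] by blast
  have "\<forall>i\<in>{1..n+1}. y i = Inl i \<or> (\<exists>j<length P. i \<in> P!j \<and> y i = Inr j)"
    using covered index by (fastforce simp: y_def)
  moreover have "inj_on y {1..n+1}"
    by (rule inj_onI) (auto simp: y_def split: if_splits)
  ultimately have "y ` {1..n+1} \<in> K_facets n P" by (auto simp: K_facets_def)
  moreover have "\<sigma> \<subseteq> y ` {1..n+1}"
  proof
    fix s assume "s \<in> \<sigma>"
    then obtain j where j: "j < length P" "s \<in> K_block P j"
      using assms(2) by (auto simp: simplex_boundary_join_def)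
    show "s \<in> y ` {1..n+1}"
    proof (cases "s = Inr j")
      case True
      then obtain i where "i \<in> P!j" "m j = Inl i"
        using m[OF j(1)] \<open>s \<in> \<sigma>\<close> by (auto simp: K_block_def)
      then have "y i = s" using index[OF j(1)] True by (simp add: y_def)
      then show ?thesis using \<open>i \<in> P!j\<close> block_sub[OF j(1)] by blast
    next
      case False
      then obtain i where "i \<in> P!j" "s = Inl i" using j(2) by (auto simp: K_block_def)
      then have "y i = s" using index[OF j(1)] m[OF j(1)] \<open>s \<in> \<sigma>\<close> by (auto simp: y_def)
      then show ?thesis using \<open>i \<in> P!j\<close> block_sub[OF j(1)] by blast
    qed
  qed
  ultimately show thesis using that by blast
qed

lemma K_faces_eq_join:
  assumes "is_partition n P"
  shows "K_faces n P = simplex_boundary_join {..<length P} (K_block P)"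
proof (intro set_eqI iffI)
  fix \<sigma> assume "\<sigma> \<in> K_faces n P"
  then obtain F where "\<sigma> \<noteq> {}" "F \<in> K_facets n P" "\<sigma> \<subseteq> F" by (auto simp: K_faces_def)
  moreover from this have "\<sigma> \<subseteq> K_vertices n P" using K_facet_subset_vertices by blast
  moreover have "\<not> K_block P j \<subseteq> \<sigma>" if "j < length P" for j
    using K_facet_misses_block[OF assms \<open>F \<in> K_facets n P\<close> that] \<open>\<sigma> \<subseteq> F\<close> by blast
  ultimately show "\<sigma> \<in> simplex_boundary_join {..<length P} (K_block P)"
    by (simp add: simplex_boundary_join_def K_vertices_eq[OF assms])
next
  fix \<sigma> assume \<sigma>: "\<sigma> \<in> simplex_boundary_join {..<length P} (K_block P)"
  then obtain F where "F \<in> K_facets n P" "\<sigma> \<subseteq> F" by (rule K_facet_through_join_face[OF assms])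
  with \<sigma> show "\<sigma> \<in> K_faces n P" by (auto simp: K_faces_def simplex_boundary_join_def)
qed

lemma K_complex_iso_join:
  assumes "is_partition n P" and C: "\<And>j. j < length P \<Longrightarrow> finite (C j) \<and> card (C j) = card (P!j) + 1"
  shows "complex_iso (K_vertices n P) (K_faces n P)
    (Sigma {..<length P} C) (simplex_boundary_join {..<length P} (\<lambda>j. {j} \<times> C j))"
proof -
  have "\<exists>f. bij_betw f (K_block P j) ({j} \<times> C j)" if "j \<in> {..<length P}" for j
  proof (rule finite_same_card_bij)
    have "finite (P!j)" using partition_block_finite[OF assms(1)] that by simp
    then show "finite (K_block P j)" "card (K_block P j) = card ({j} \<times> C j)"
      using C that card_K_block by (simp_all add: K_block_def card_cartesian_product_singleton)
    show "finite ({j} \<times> C j)" using C that by simp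
  qed
  then obtain f where f: "\<And>j. j \<in> {..<length P} \<Longrightarrow> bij_betw (f j) (K_block P j) ({j} \<times> C j)"
    by metis
  have "disjoint_family_on (\<lambda>j. {j} \<times> C j) {..<length P}"
    by (auto simp: disjoint_family_on_def)
  from simplex_boundary_join_iso[OF f disjoint_K_block[OF assms(1)] this]
  have "complex_iso (\<Union>j<length P. K_block P j) (simplex_boundary_join {..<length P} (K_block P))
      (\<Union>j<length P. {j} \<times> C j) (simplex_boundary_join {..<length P} (\<lambda>j. {j} \<times> C j))" .
  moreover have "Sigma {..<length P} C = (\<Union>j<length P. {j} \<times> C j)" by auto
  ultimately show ?thesis
    by (simp only: K_vertices_eq[OF assms(1)] K_faces_eq_join[OF assms(1)])
qed

lemma card_preimage_bij:
  assumes "bij_betw e UNIV X" "A \<subseteq> X"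
  shows "card {k. e k \<in> A} = card A"
proof -
  have "e ` {k. e k \<in> A} = A" using assms unfolding bij_betw_def by blast
  with assms(1) have "bij_betw e {k. e k \<in> A} A" by (rule bij_betw_subset[OF _ subset_UNIV])
  then show ?thesis by (rule bij_betw_same_card)
qed

lemma simplex_product_partition_blocks:
  fixes e :: "'d::finite \<Rightarrow> nat" and C :: "nat \<Rightarrow> (real^'d) set"
  assumes part: "is_partition n P" and e: "bij_betw e UNIV {1..n+1}"
    and C: "\<And>j. j < length P \<Longrightarrow> \<not> affine_dependent (C j) \<and> card (C j) = card (P!j) + 1"
    and C_subspace: "\<And>j. j < length P \<Longrightarrow> C j \<subseteq> coordinate_subspace {k. e k \<in> P!j}"
  shows "simplex_product {..<length P} (\<lambda>j. {k. e k \<in> P!j}) C"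
proof
  have card_B: "card {k. e k \<in> P!j} = card (P!j)" if "j < length P" for j
    using card_preimage_bij[OF e] that partition_Union[OF part] by blast
  show "disjoint_family_on (\<lambda>j. {k. e k \<in> P!j}) {..<length P}"
    using partition_disjoint[OF part] by (auto simp: disjoint_family_on_def)
  show "card (C j) = card {k. e k \<in> P!j} + 1" if "j \<in> {..<length P}" for j
    using C card_B that by simp
  show "{k. e k \<in> P!j} \<noteq> {}" if "j \<in> {..<length P}" for j
    using card_B partition_nonempty[OF part] partition_block_finite[OF part] that by fastforce
qed (use C C_subspace in auto)

theorem theorem2p5:
  fixes n :: nat and P :: "nat set list"
    and e :: "'d::finite \<Rightarrow> nat"
    and S :: "nat \<Rightarrow> (real^'d) set"
    and c :: "real^'d"
  assumes n2: "n \<ge> 2"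
    and part: "is_partition n P"
    and e_bij: "bij_betw e UNIV {1..n+1}"
    and simp: "\<forall>j<length P. int (card (P!j)) simplex (S j)"
    and simp_block: "\<forall>j<length P. \<forall>x\<in>S j. \<forall>k. e k \<notin> P!j \<longrightarrow> x $ k = 0"
    and c_int: "c \<in> interior {x. \<forall>j<length P. block_proj {k. e k \<in> P!j} x \<in> S j}"
  shows "complex_iso (K_vertices n P) (K_faces n P)
           (bd_vertices (polar_dual ((\<lambda>x. x - c) ` {x. \<forall>j<length P. block_proj {k. e k \<in> P!j} x \<in> S j})))
           (bd_faces (polar_dual ((\<lambda>x. x - c) ` {x. \<forall>j<length P. block_proj {k. e k \<in> P!j} x \<in> S j})))"
proof -
  obtain C where C: "\<And>j. j < length P \<Longrightarrow>
      \<not> affine_dependent (C j) \<and> int (card (C j)) = int (card (P!j)) + 1 \<and> S j = convex hull (C j)"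
    using simp unfolding simplex_def by metis
  have C_card: "card (C j) = card (P!j) + 1" if "j < length P" for j
    using C[OF that] by linarith
  have "C j \<subseteq> coordinate_subspace {k. e k \<in> P!j}" if "j < length P" for j
    using simp_block C that hull_inc[of _ "C j"] by (fastforce simp: coordinate_subspace_def)
  with C C_card interpret simplex_product "{..<length P}" "\<lambda>j. {k. e k \<in> P!j}" C
    by (intro simplex_product_partition_blocks[OF part e_bij]) auto
  have prod_eq: "simplex_prod = {x. \<forall>j<length P. block_proj {k. e k \<in> P!j} x \<in> S j}"
    by (auto simp: simplex_prod_def C)
  have "{..<length P} \<noteq> {}" using partition_Union[OF part] by auto
  from polar_dual_simplex_prod_boundary_complex[OF this] c_int
  have polar_iso: "complex_iso (Sigma {..<length P} C) (simplex_boundary_join {..<length P} (\<lambda>j. {j} \<times> C j))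
      (bd_vertices (polar_dual ((\<lambda>x. x - c) ` simplex_prod)))
      (bd_faces (polar_dual ((\<lambda>x. x - c) ` simplex_prod)))"
    by (simp add: prod_eq)
  have "finite (C j) \<and> card (C j) = card (P!j) + 1" if "j < length P" for j
    using finite_C C_card that by simp
  from K_complex_iso_join[OF part this]
  have K_iso: "complex_iso (K_vertices n P) (K_faces n P)
      (Sigma {..<length P} C) (simplex_boundary_join {..<length P} (\<lambda>j. {j} \<times> C j))" .
  from complex_iso_trans[OF K_iso polar_iso] show ?thesis by (simp only: prod_eq)
qed

end
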